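(* Let $G$ be a Tanner graph with largest right (check-node) degree $d_r^+$ and $t$-value $t$, so every irreducible lift-realizable pseudocodeword $p=(p_1,\dots,p_n)$ of $G$ has $0\le p_i\le t$. Then the smallest lift degree $m_{\min}$ needed to realize all irreducible pseudocodewords of $G$ satisfies \[ m_{\min}\le \max_{u_j}\frac{\sum_{v_i\in N(u_j)}p_i}{2}\le \frac{t\,d_r^+}{2},\] where the maximum is over all check nodes $u_j$ of $G$ and $N(u_j)$ is the set of variable-node neighbours of $u_j$ (for each irreducible pseudocodeword $p$, the middle quantity bounds the smallest degree of a lift realizing $p$).
   Context: A Tanner graph $G$ is a finite bipartite graph with variable nodes $v_1,\dots,v_n$ and check nodes $u_1,\dots,u_m$; it defines the binary code of all $x\in\{0,1\}^n$ such that every check node has an even number of neighbours $v_i$ with $x_i=1$. A degree-$\ell$ lift of $G$ replaces each node by a cloud of $\ell$ copies and each edge $(x,y)$ by a perfect matching between the clouds. A lift-realizable pseudocodeword $p\in\mathbb{Z}_{\ge0}^n$ is obtained from a codeword of the code of some finite lift by letting $p_i$ be the number of copies of $v_i$ assigned 1; $p$ is realized in that lift. A pseudocodeword is irreducible if it cannot be written as a sum of two or more nonzero codewords or pseudocodewords. The $t$-value of $G$ is the maximum component value of an irreducible pseudocodeword of $G$. *)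

theory Defs
  imports Complex_Main
begin

(* A Tanner graph with variable nodes v_0..v_{n-1} (indices i < n) and check nodes
   u_0..u_{m-1} (indices j < m); E i j means v_i is adjacent to u_j.
   Everything below only looks at E on i < n, j < m. *)

(* A degree-l lift: every edge (v_i,u_j) is replaced by a perfect matching between the
   cloud {(i,a). a < l} and the cloud {(j,b). b < l}, given by the permutation \<pi> i j:
   copy (i,a) is joined to copy (j, \<pi> i j a). *)
definition is_lift :: "nat \<Rightarrow> nat \<Rightarrow> (nat \<Rightarrow> nat \<Rightarrow> bool) \<Rightarrow> nat \<Rightarrow> (nat \<Rightarrow> nat \<Rightarrow> nat \<Rightarrow> nat) \<Rightarrow> bool" where
  "is_lift n m E l \<pi> \<longleftrightarrow> (\<forall>i<n. \<forall>j<m. E i j \<longrightarrow> bij_betw (\<pi> i j) {..<l} {..<l})"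

(* x i a = value of copy a of v_i; every check copy (j,b) has an even number of
   neighbours with value 1. *)
definition lift_codeword :: "nat \<Rightarrow> nat \<Rightarrow> (nat \<Rightarrow> nat \<Rightarrow> bool) \<Rightarrow> nat \<Rightarrow> (nat \<Rightarrow> nat \<Rightarrow> nat \<Rightarrow> nat) \<Rightarrow> (nat \<Rightarrow> nat \<Rightarrow> bool) \<Rightarrow> bool" where
  "lift_codeword n m E l \<pi> x \<longleftrightarrow>
     (\<forall>j<m. \<forall>b<l. even (card {(i, a). i < n \<and> a < l \<and> E i j \<and> \<pi> i j a = b \<and> x i a}))"

definition realized_in :: "nat \<Rightarrow> nat \<Rightarrow> (nat \<Rightarrow> nat \<Rightarrow> bool) \<Rightarrow> nat \<Rightarrow> (nat \<Rightarrow> nat \<Rightarrow> nat \<Rightarrow> nat) \<Rightarrow> (nat \<Rightarrow> nat) \<Rightarrow> bool" where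
  "realized_in n m E l \<pi> p \<longleftrightarrow> is_lift n m E l \<pi> \<and>
     (\<exists>x. lift_codeword n m E l \<pi> x \<and>
          (\<forall>i. p i = (if i < n then card {a. a < l \<and> x i a} else 0)))"

definition pseudocodeword :: "nat \<Rightarrow> nat \<Rightarrow> (nat \<Rightarrow> nat \<Rightarrow> bool) \<Rightarrow> (nat \<Rightarrow> nat) \<Rightarrow> bool" where
  "pseudocodeword n m E p \<longleftrightarrow> (\<exists>l \<pi>. 1 \<le> l \<and> realized_in n m E l \<pi> p)"

definition irreducible_pcw :: "nat \<Rightarrow> nat \<Rightarrow> (nat \<Rightarrow> nat \<Rightarrow> bool) \<Rightarrow> (nat \<Rightarrow> nat) \<Rightarrow> bool" where
  "irreducible_pcw n m E p \<longleftrightarrow> pseudocodeword n m E p \<and> p \<noteq> (\<lambda>_. 0) \<and>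
     \<not> (\<exists>qs. 2 \<le> length qs \<and> (\<forall>q\<in>set qs. pseudocodeword n m E q \<and> q \<noteq> (\<lambda>_. 0)) \<and>
            p = (\<lambda>i. \<Sum>q\<leftarrow>qs. q i))"

definition max_check_degree :: "nat \<Rightarrow> nat \<Rightarrow> (nat \<Rightarrow> nat \<Rightarrow> bool) \<Rightarrow> nat" where
  "max_check_degree n m E = Max ((\<lambda>j. card {i. i < n \<and> E i j}) ` {..<m})"

definition max_check_sum :: "nat \<Rightarrow> nat \<Rightarrow> (nat \<Rightarrow> nat \<Rightarrow> bool) \<Rightarrow> (nat \<Rightarrow> nat) \<Rightarrow> nat" where
  "max_check_sum n m E p = Max ((\<lambda>j. \<Sum>i\<in>{i. i < n \<and> E i j}. p i) ` {..<m})"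

definition min_lift_degree :: "nat \<Rightarrow> nat \<Rightarrow> (nat \<Rightarrow> nat \<Rightarrow> bool) \<Rightarrow> (nat \<Rightarrow> nat) \<Rightarrow> nat" where
  "min_lift_degree n m E p = (LEAST l. 1 \<le> l \<and> (\<exists>\<pi>. realized_in n m E l \<pi> p))"

definition m_min :: "nat \<Rightarrow> nat \<Rightarrow> (nat \<Rightarrow> nat \<Rightarrow> bool) \<Rightarrow> nat" where
  "m_min n m E = (LEAST l. 1 \<le> l \<and>
     (\<forall>p. irreducible_pcw n m E p \<longrightarrow> (\<exists>\<pi>. realized_in n m E l \<pi> p)))"

end

theory Submission
  imports Defs "HOL-Number_Theory.Cong"
begin

(* Counting the ones of a lift codeword over the l copies of a check node u_j shows that a
   realizable p is check-consistent: the neighbourhood sum S_j is even and 2 p_i <= S_j for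
   every neighbour v_i, because every copy of u_j sees an even number of ones and at most one
   from each cloud. Conversely, a check-consistent p is realized in any lift of degree
   L >= max_j S_j / 2 (and p_i <= L, automatic without isolated variables): put the ones on
   the first p_i copies of v_i and wind the neighbours' blocks of ones, one after another,
   twice around the first S_j / 2 copies of u_j; as no block is longer than S_j / 2, every
   such copy is hit exactly twice. *)

abbreviation (input) check_nbhd :: "nat \<Rightarrow> (nat \<Rightarrow> nat \<Rightarrow> bool) \<Rightarrow> nat \<Rightarrow> nat set" where
  "check_nbhd n E j \<equiv> {i. i < n \<and> E i j}"

definition ones_at_check_copy ::
    "nat \<Rightarrow> (nat \<Rightarrow> nat \<Rightarrow> bool) \<Rightarrow> nat \<Rightarrow> (nat \<Rightarrow> nat \<Rightarrow> nat \<Rightarrow> nat) \<Rightarrow> (nat \<Rightarrow> nat \<Rightarrow> bool)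
     \<Rightarrow> nat \<Rightarrow> nat \<Rightarrow> (nat \<times> nat) set" where
  "ones_at_check_copy n E l \<pi> x j b = {(i, a). i < n \<and> a < l \<and> E i j \<and> \<pi> i j a = b \<and> x i a}"

lemma finite_ones_at_check_copy [simp]: "finite (ones_at_check_copy n E l \<pi> x j b)"
  by (rule finite_subset[of _ "{..<n} \<times> {..<l}"]) (auto simp: ones_at_check_copy_def)

lemma lift_codeword_iff:
  "lift_codeword n m E l \<pi> x \<longleftrightarrow> (\<forall>j<m. \<forall>b<l. even (card (ones_at_check_copy n E l \<pi> x j b)))"
  by (simp add: lift_codeword_def ones_at_check_copy_def)

definition check_consistent :: "nat \<Rightarrow> nat \<Rightarrow> (nat \<Rightarrow> nat \<Rightarrow> bool) \<Rightarrow> (nat \<Rightarrow> nat) \<Rightarrow> bool" where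
  "check_consistent n m E p \<longleftrightarrow>
     (\<forall>j<m. even (sum p (check_nbhd n E j)) \<and> (\<forall>i\<in>check_nbhd n E j. 2 * p i \<le> sum p (check_nbhd n E j)))"

lemma is_lift_image:
  assumes "is_lift n m E l \<pi>" "i < n" "j < m" "E i j" "a < l"
  shows "\<pi> i j a < l"
  using assms unfolding is_lift_def by (meson bij_betwE lessThan_iff)

lemma check_sum_eq_sum_ones_at_check_copies:
  assumes lift: "is_lift n m E l \<pi>" and j: "j < m"
    and p: "\<forall>i<n. p i = card {a. a < l \<and> x i a}"
  shows "sum p (check_nbhd n E j) = (\<Sum>b<l. card (ones_at_check_copy n E l \<pi> x j b))"
proof -
  define T where "T = (SIGMA i:check_nbhd n E j. {a. a < l \<and> x i a})"
  have "sum p (check_nbhd n E j) = card T"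
    unfolding T_def using p by simp
  also have "\<dots> = (\<Sum>b<l. card {t \<in> T. (\<lambda>(i, a). \<pi> i j a) t = b})"
    by (subst card_eq_sum, subst sum.group[symmetric, where g = "\<lambda>(i, a). \<pi> i j a"])
       (auto simp: T_def is_lift_image[OF lift _ j])
  also have "\<dots> = (\<Sum>b<l. card (ones_at_check_copy n E l \<pi> x j b))"
    by (intro sum.cong arg_cong[where f = card]) (auto simp: T_def ones_at_check_copy_def)
  finally show ?thesis .
qed

text \<open>Each check copy sees at most one 1 from the cloud of a neighbour v, and an even
  number of 1s in total; so every copy hit from v's cloud is hit at least twice.\<close>

lemma realized_imp_check_consistent:
  assumes "realized_in n m E l \<pi> p"
  shows "check_consistent n m E p"
  unfolding check_consistent_def
proof (intro allI impI conjI ballI)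
  fix j assume j: "j < m"
  obtain x where lift: "is_lift n m E l \<pi>" and cw: "lift_codeword n m E l \<pi> x"
    and p: "\<forall>i. p i = (if i < n then card {a. a < l \<and> x i a} else 0)"
    using assms by (auto simp: realized_in_def)
  let ?ones = "ones_at_check_copy n E l \<pi> x j"
  have even_ones: "even (card (?ones b))" if "b < l" for b
    using cw j that by (simp add: lift_codeword_iff)
  have sum_eq: "sum p (check_nbhd n E j) = (\<Sum>b<l. card (?ones b))"
    by (rule check_sum_eq_sum_ones_at_check_copies[OF lift j]) (simp add: p)
  show "even (sum p (check_nbhd n E j))"
    unfolding sum_eq by (rule dvd_sum) (simp add: even_ones)
  fix i assume i: "i \<in> check_nbhd n E j"
  define B where "B = \<pi> i j ` {a. a < l \<and> x i a}"
  have "inj_on (\<pi> i j) {..<l}"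
    using lift i j by (auto simp: is_lift_def bij_betw_def)
  then have card_B: "card B = p i"
    unfolding B_def using p i by (subst card_image) (auto intro: inj_on_subset)
  have B_sub: "B \<subseteq> {..<l}"
    using is_lift_image[OF lift _ j] i by (auto simp: B_def)
  have two_le: "2 \<le> card (?ones b)" if "b \<in> B" for b
  proof -
    have "?ones b \<noteq> {}"
      using that i by (auto simp: B_def ones_at_check_copy_def)
    then have "card (?ones b) \<noteq> 0" by simp
    moreover have "even (card (?ones b))" using even_ones B_sub that by blast
    ultimately show ?thesis by (elim evenE) simp
  qed
  have "2 * p i = (\<Sum>b\<in>B. 2)" by (simp add: card_B)
  also have "\<dots> \<le> (\<Sum>b\<in>B. card (?ones b))" by (rule sum_mono) (rule two_le)
  also have "\<dots> \<le> (\<Sum>b<l. card (?ones b))" by (rule sum_mono2[OF _ B_sub]) auto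
  finally show "2 * p i \<le> sum p (check_nbhd n E j)" by (simp add: sum_eq)
qed

lemma bij_betw_add_mod: "bij_betw (\<lambda>a. (c + a) mod h) {..<h} {..<(h::nat)}"
proof -
  have inj: "inj_on (\<lambda>a. (c + a) mod h) {..<h}"
    by (intro inj_onI) (metis cong_def cong_add_lcancel_nat cong_less_modulus_unique_nat lessThan_iff)
  moreover have "(\<lambda>a. (c + a) mod h) ` {..<h} \<subseteq> {..<h}"
    by auto
  ultimately show ?thesis
    by (simp add: bij_betw_def endo_inj_surj)
qed

lemma bij_betw_rotate_prefix:
  fixes h L :: nat
  assumes "h \<le> L"
  shows "bij_betw (\<lambda>a. if a < h then (c + a) mod h else a) {..<L} {..<L}"
proof -
  have "bij_betw (\<lambda>a. if a < h then (c + a) mod h else a) ({..<h} \<union> {h..<L}) ({..<h} \<union> {h..<L})"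
  proof (rule bij_betw_combine)
    show "bij_betw (\<lambda>a. if a < h then (c + a) mod h else a) {..<h} {..<h}"
      by (rule bij_betw_cong[THEN iffD1, OF _ bij_betw_add_mod]) auto
    show "bij_betw (\<lambda>a. if a < h then (c + a) mod h else a) {h..<L} {h..<L}"
      by (rule bij_betw_cong[THEN iffD2, OF _ bij_betw_id]) auto
  qed auto
  moreover have "{..<h} \<union> {h..<L} = {..<L}"
    using assms by auto
  ultimately show ?thesis by simp
qed

lemma bij_betw_Sigma_prefix_sums:
  fixes f :: "nat \<Rightarrow> nat"
  shows "bij_betw (\<lambda>(i, a). (\<Sum>k | k < i \<and> P k. f k) + a)
           (SIGMA i:{i. i < n \<and> P i}. {..<f i}) {..<(\<Sum>k | k < n \<and> P k. f k)}"
proof (induction n)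
  case 0
  show ?case by (simp add: bij_betw_def)
next
  case (Suc n)
  show ?case
  proof (cases "P n")
    case False
    then have "{i. i < Suc n \<and> P i} = {i. i < n \<and> P i}"
      by (auto simp: less_Suc_eq)
    with Suc show ?thesis by simp
  next
    case True
    define s where "s = (\<Sum>k | k < n \<and> P k. f k)"
    have nbhd_Suc: "{i. i < Suc n \<and> P i} = insert n {i. i < n \<and> P i}"
      using True by (auto simp: less_Suc_eq)
    have "bij_betw (\<lambda>(i, a). (\<Sum>k | k < i \<and> P k. f k) + a)
            ((SIGMA i:{i. i < n \<and> P i}. {..<f i}) \<union> {n} \<times> {..<f n}) ({..<s} \<union> {s..<s + f n})"
    proof (rule bij_betw_combine[OF Suc.IH[folded s_def]])
      have "(\<lambda>(i, a). (\<Sum>k | k < i \<and> P k. f k) + a) ` ({n} \<times> {..<f n}) = (+) s ` {..<f n}"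
        by (force simp: s_def)
      also have "\<dots> = {s..<s + f n}"
        by (simp add: atLeast0LessThan[symmetric] add.commute)
      finally show "bij_betw (\<lambda>(i, a). (\<Sum>k | k < i \<and> P k. f k) + a) ({n} \<times> {..<f n}) {s..<s + f n}"
        by (auto simp: bij_betw_def inj_on_def)
    qed auto
    moreover have "(SIGMA i:{i. i < Suc n \<and> P i}. {..<f i}) =
        (SIGMA i:{i. i < n \<and> P i}. {..<f i}) \<union> {n} \<times> {..<f n}"
      by (auto simp: nbhd_Suc)
    moreover have "{..<s} \<union> {s..<s + f n} = {..<s + f n}" by auto
    moreover have "(\<Sum>k | k < Suc n \<and> P k. f k) = s + f n"
      by (simp add: nbhd_Suc s_def add.commute)
    ultimately show ?thesis by simp
  qed
qed

lemma mod_eq_below_double: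
  fixes b h :: nat
  assumes "b < h"
  shows "{s. s < 2 * h \<and> s mod h = b} = {b, b + h}"
proof -
  have "s = b \<or> s = b + h" if "s < 2 * h" "s mod h = b" for s
    using that by (cases "s < h") (auto simp: le_mod_geq)
  then show ?thesis using assms by auto
qed

text \<open>The lift used to realize a check-consistent \<open>p\<close> (with ones on the first \<open>p i\<close> copies
  of \<open>v\<^sub>i\<close>): the blocks of ones of the neighbours of \<open>u\<^sub>j\<close>, laid out one after another,
  are wound twice around the first \<open>h = S\<^sub>j / 2\<close> copies of \<open>u\<^sub>j\<close>.\<close>

definition block_lift :: "nat \<Rightarrow> (nat \<Rightarrow> nat \<Rightarrow> bool) \<Rightarrow> (nat \<Rightarrow> nat) \<Rightarrow> nat \<Rightarrow> nat \<Rightarrow> nat \<Rightarrow> nat" where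
  "block_lift n E p i j a =
     (let h = sum p (check_nbhd n E j) div 2
      in if a < h then ((\<Sum>k | k < i \<and> E k j. p k) + a) mod h else a)"

lemma is_lift_block_lift:
  assumes "\<forall>j<m. sum p (check_nbhd n E j) \<le> 2 * L"
  shows "is_lift n m E L (block_lift n E p)"
  unfolding is_lift_def block_lift_def Let_def
  using assms by (auto intro!: bij_betw_rotate_prefix)

lemma card_ones_at_check_copy_block_lift:
  assumes cons: "check_consistent n m E p" and j: "j < m" and b: "b < L"
    and p_le: "\<forall>i<n. p i \<le> L"
  defines "h \<equiv> sum p (check_nbhd n E j) div 2"
  shows "card (ones_at_check_copy n E L (block_lift n E p) (\<lambda>i a. a < p i) j b) = (if b < h then 2 else 0)"
proof -
  let ?ones = "ones_at_check_copy n E L (block_lift n E p) (\<lambda>i a. a < p i) j b"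
  let ?g = "\<lambda>(i, a). (\<Sum>k | k < i \<and> E k j. p k) + a"
  let ?blocks = "SIGMA i:check_nbhd n E j. {..<p i}"
  have p_le_h: "p i \<le> h" if "i \<in> check_nbhd n E j" for i
    using cons j that unfolding check_consistent_def h_def by fastforce
  have ones_eq: "?ones = {t \<in> ?blocks. ?g t mod h = b \<and> b < h}"
  proof -
    have "t \<in> ?ones \<longleftrightarrow> t \<in> {t \<in> ?blocks. ?g t mod h = b \<and> b < h}" for t
    proof (cases t)
      case (Pair i a)
      show ?thesis
      proof (cases "i \<in> check_nbhd n E j \<and> a < p i")
        case True
        then have "a < h" "a < L" using p_le_h p_le by fastforce+
        then show ?thesis using True Pair
          by (auto simp: ones_at_check_copy_def block_lift_def h_def[symmetric])
      qed (auto simp: Pair ones_at_check_copy_def)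
    qed
    then show ?thesis by blast
  qed
  show ?thesis
  proof (cases "b < h")
    case True
    have "even (sum p (check_nbhd n E j))"
      using cons j by (simp add: check_consistent_def)
    then have "sum p (check_nbhd n E j) = 2 * h" by (simp add: h_def)
    then have bij: "bij_betw ?g ?blocks {..<2 * h}"
      using bij_betw_Sigma_prefix_sums[of p "\<lambda>k. E k j" n] by simp
    have "inj_on ?g ?blocks" using bij by (rule bij_betw_imp_inj_on)
    moreover have "?ones = {t \<in> ?blocks. ?g t mod h = b}"
      using ones_eq True by simp
    ultimately have "card ?ones = card (?g ` {t \<in> ?blocks. ?g t mod h = b})"
      by (simp add: card_image inj_on_subset)
    also have "?g ` {t \<in> ?blocks. ?g t mod h = b} = {s \<in> ?g ` ?blocks. s mod h = b}"
      by blast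
    also have "\<dots> = {s. s < 2 * h \<and> s mod h = b}"
      using bij_betw_imp_surj_on[OF bij] by auto
    also have "\<dots> = {b, b + h}" using mod_eq_below_double[OF True] .
    finally show ?thesis using True by simp
  qed (simp add: ones_eq)
qed

lemma check_consistent_realized_in:
  assumes cons: "check_consistent n m E p"
    and p_le: "\<forall>i<n. p i \<le> L"
    and sum_le: "\<forall>j<m. sum p (check_nbhd n E j) \<le> 2 * L"
    and p_zero: "\<forall>i\<ge>n. p i = 0"
  shows "realized_in n m E L (block_lift n E p) p"
proof -
  have "lift_codeword n m E L (block_lift n E p) (\<lambda>i a. a < p i)"
    using card_ones_at_check_copy_block_lift[OF cons _ _ p_le] by (simp add: lift_codeword_iff)
  moreover have "p i = (if i < n then card {a. a < L \<and> a < p i} else 0)" for i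
  proof (cases "i < n")
    case True
    then have "{a. a < L \<and> a < p i} = {..<p i}" using p_le by auto
    then show ?thesis using True by simp
  qed (simp add: p_zero)
  ultimately show ?thesis
    using is_lift_block_lift[OF sum_le] unfolding realized_in_def by blast
qed

lemma check_sum_le_max_check_sum:
  "j < m \<Longrightarrow> sum p (check_nbhd n E j) \<le> max_check_sum n m E p"
  unfolding max_check_sum_def by (intro Max_ge) auto

lemma max_check_sum_le:
  assumes "0 < m" and "\<forall>j<m. sum p (check_nbhd n E j) \<le> B"
  shows "max_check_sum n m E p \<le> B"
  using assms unfolding max_check_sum_def by (subst Max_le_iff) auto

lemma card_check_nbhd_le_max_check_degree:
  "j < m \<Longrightarrow> card (check_nbhd n E j) \<le> max_check_degree n m E"
  unfolding max_check_degree_def by (intro Max_ge) auto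

lemma max_check_sum_le_mult_max_check_degree:
  assumes "0 < m" and "\<forall>i<n. p i \<le> t"
  shows "max_check_sum n m E p \<le> t * max_check_degree n m E"
proof (intro max_check_sum_le allI impI)
  fix j assume "j < m"
  have "sum p (check_nbhd n E j) \<le> card (check_nbhd n E j) * t"
    using assms(2) sum_bounded_above[of "check_nbhd n E j" p t] by simp
  also have "\<dots> \<le> max_check_degree n m E * t"
    using card_check_nbhd_le_max_check_degree[OF \<open>j < m\<close>] by simp
  finally show "sum p (check_nbhd n E j) \<le> t * max_check_degree n m E"
    by (simp add: mult.commute)
qed fact

lemma twice_le_max_check_sum:
  assumes no_isolated: "\<forall>i<n. \<exists>j<m. E i j"
    and cons: "check_consistent n m E p" and i: "i < n"
  shows "2 * p i \<le> max_check_sum n m E p"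
proof -
  obtain j where "j < m" "E i j" using no_isolated i by blast
  then have "2 * p i \<le> sum p (check_nbhd n E j)"
    using cons i by (auto simp: check_consistent_def)
  also have "\<dots> \<le> max_check_sum n m E p"
    using check_sum_le_max_check_sum[OF \<open>j < m\<close>] .
  finally show ?thesis .
qed

lemma pseudocodeword_realized_in_half_max_check_sum:
  assumes no_isolated: "\<forall>i<n. \<exists>j<m. E i j"
    and pcw: "pseudocodeword n m E p" and L: "max_check_sum n m E p div 2 \<le> L"
  shows "\<exists>\<pi>. realized_in n m E L \<pi> p"
proof -
  obtain l \<pi> where R: "realized_in n m E l \<pi> p"
    using pcw by (auto simp: pseudocodeword_def)
  have cons: "check_consistent n m E p"
    using realized_imp_check_consistent[OF R] .
  have "realized_in n m E L (block_lift n E p) p"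
  proof (rule check_consistent_realized_in[OF cons])
    show "\<forall>i<n. p i \<le> L"
      using twice_le_max_check_sum[OF no_isolated cons] L by fastforce
    show "\<forall>j<m. sum p (check_nbhd n E j) \<le> 2 * L"
    proof (intro allI impI)
      fix j assume "j < m"
      then have "even (sum p (check_nbhd n E j))"
        using cons by (simp add: check_consistent_def)
      moreover have "sum p (check_nbhd n E j) div 2 \<le> L"
        using check_sum_le_max_check_sum[OF \<open>j < m\<close>] L div_le_mono le_trans by blast
      ultimately show "sum p (check_nbhd n E j) \<le> 2 * L" by (elim evenE) simp
    qed
    show "\<forall>i\<ge>n. p i = 0"
      using R unfolding realized_in_def by (metis not_less)
  qed
  then show ?thesis by blast
qed

lemma two_le_max_check_sum:
  assumes no_isolated: "\<forall>i<n. \<exists>j<m. E i j"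
    and pcw: "pseudocodeword n m E p" and nonzero: "p \<noteq> (\<lambda>_. 0)"
  shows "2 \<le> max_check_sum n m E p"
proof -
  obtain l \<pi> where R: "realized_in n m E l \<pi> p"
    using pcw by (auto simp: pseudocodeword_def)
  obtain i where "p i \<noteq> 0" using nonzero by auto
  moreover have "i < n"
    using R \<open>p i \<noteq> 0\<close> by (auto simp: realized_in_def split: if_splits)
  ultimately show ?thesis
    using twice_le_max_check_sum[OF no_isolated realized_imp_check_consistent[OF R]] by fastforce
qed

lemma min_lift_degree_le_half_max_check_sum:
  assumes no_isolated: "\<forall>i<n. \<exists>j<m. E i j"
    and pcw: "pseudocodeword n m E p" and nonzero: "p \<noteq> (\<lambda>_. 0)"
  shows "min_lift_degree n m E p \<le> max_check_sum n m E p div 2"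
  unfolding min_lift_degree_def
proof (rule Least_le, rule conjI)
  show "1 \<le> max_check_sum n m E p div 2"
    using two_le_max_check_sum[OF assms] by simp
  show "\<exists>\<pi>. realized_in n m E (max_check_sum n m E p div 2) \<pi> p"
    using pseudocodeword_realized_in_half_max_check_sum[OF no_isolated pcw] by simp
qed

lemma m_min_le_half_bound:
  assumes no_isolated: "\<forall>i<n. \<exists>j<m. E i j"
    and irr0: "irreducible_pcw n m E p0"
    and bound: "\<forall>p. irreducible_pcw n m E p \<longrightarrow> max_check_sum n m E p \<le> B"
  shows "m_min n m E \<le> B div 2"
  unfolding m_min_def
proof (rule Least_le, intro conjI allI impI)
  show "1 \<le> B div 2"
    using two_le_max_check_sum[OF no_isolated] irr0 bound by (fastforce simp: irreducible_pcw_def)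
  show "\<exists>\<pi>. realized_in n m E (B div 2) \<pi> p" if "irreducible_pcw n m E p" for p
    using pseudocodeword_realized_in_half_max_check_sum[OF no_isolated] that bound div_le_mono
    by (auto simp: irreducible_pcw_def)
qed

theorem theorem5:
  fixes n m :: nat and E :: "nat \<Rightarrow> nat \<Rightarrow> bool" and t :: nat
  assumes no_isolated: "\<forall>i<n. \<exists>j<m. E i j"
    and t_bound: "\<forall>p. irreducible_pcw n m E p \<longrightarrow> (\<forall>i<n. p i \<le> t)"
    and t_attained: "\<exists>p i. irreducible_pcw n m E p \<and> i < n \<and> p i = t"
  shows "(\<forall>p. irreducible_pcw n m E p \<longrightarrow>
            real (min_lift_degree n m E p) \<le> real (max_check_sum n m E p) / 2 \<and>
            real (max_check_sum n m E p) / 2 \<le> real t * real (max_check_degree n m E) / 2)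
         \<and> real (m_min n m E) \<le> real t * real (max_check_degree n m E) / 2"
proof -
  define d where "d = max_check_degree n m E"
  obtain p0 i0 where irr0: "irreducible_pcw n m E p0" and "i0 < n"
    using t_attained by blast
  then have "0 < m" using no_isolated by fastforce
  have max_le: "max_check_sum n m E p \<le> t * d" if "irreducible_pcw n m E p" for p
    using that t_bound max_check_sum_le_mult_max_check_degree[OF \<open>0 < m\<close>] by (simp add: d_def)
  have "real (min_lift_degree n m E p) \<le> real (max_check_sum n m E p) / 2"
    if "irreducible_pcw n m E p" for p
  proof -
    have "min_lift_degree n m E p \<le> max_check_sum n m E p div 2"
      using min_lift_degree_le_half_max_check_sum[OF no_isolated] that
      by (simp add: irreducible_pcw_def)
    then show ?thesis by linarith
  qed
  moreover have "real (max_check_sum n m E p) \<le> real t * real d" if "irreducible_pcw n m E p" for p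
    using max_le[OF that] by (simp flip: of_nat_mult)
  moreover have "real (m_min n m E) \<le> real (t * d) / 2"
  proof -
    have "m_min n m E \<le> t * d div 2"
      using m_min_le_half_bound[OF no_isolated irr0] max_le by blast
    then show ?thesis by linarith
  qed
  ultimately show ?thesis by (simp add: d_def)
qed

end
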